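(* Let $\Psi:\Omega_N\to\Omega_N$ be a mixed unitary channel, i.e. $\Psi(\rho)=\sum_i p_iU_i\rho U_i^\dagger$ with $U_i\in\mathrm U(N)$, $p_i\ge0$ and $\sum_ip_i=1$. Then for all $\rho^A,\rho^B\in\Omega_N$, $$T^Q(\Psi(\rho^A),\Psi(\rho^B))\le T^Q(\rho^A,\rho^B).$$
   Context: $\Omega_N$ is the set of $N\times N$ density matrices (Hermitian, positive semidefinite, trace one). Let $S$ be the swap operator on $\mathbb{C}^N\otimes\mathbb{C}^N$, and let $C^Q=\tfrac12(\mathbb{1}-S)$. Let $\Gamma^Q(\rho^A,\rho^B)$ be the set of density matrices $\rho^{AB}$ on $\mathbb{C}^N\otimes\mathbb{C}^N$ with $\operatorname{Tr}_B\rho^{AB}=\rho^A$ and $\operatorname{Tr}_A\rho^{AB}=\rho^B$. Define $$T^Q(\rho^A,\rho^B)=\min_{\rho^{AB}\in\Gamma^Q(\rho^A,\rho^B)}\operatorname{Tr}(C^Q\rho^{AB}).$$ *)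

theory Defs
  imports "HOL-Analysis.Analysis"
begin

text \<open>Complex N x N matrices are represented as complex^'n^'n with a finite index type 'n
  (N = CARD('n)); operators on C^N (x) C^N are indexed by the product type 'n \<times> 'n.\<close>

definition cadj :: "complex^'m^'n \<Rightarrow> complex^'n^'m" where
  "cadj A = (\<chi> i j. cnj (A $ j $ i))"

definition hermitian_mat :: "complex^'n^'n \<Rightarrow> bool" where
  "hermitian_mat A \<longleftrightarrow> cadj A = A"

definition psd_mat :: "complex^'n^'n \<Rightarrow> bool" where
  "psd_mat A \<longleftrightarrow> hermitian_mat A \<and>
     (\<forall>v::complex^'n. 0 \<le> Re (\<Sum>i\<in>UNIV. cnj (v $ i) * (A *v v) $ i))"

definition density_mat :: "complex^'n^'n \<Rightarrow> bool" where
  "density_mat A \<longleftrightarrow> psd_mat A \<and> trace A = 1"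

definition unitary_mat :: "complex^'n^'n \<Rightarrow> bool" where
  "unitary_mat U \<longleftrightarrow> cadj U ** U = mat 1"

definition ptrace_B :: "complex^('n::finite \<times> 'n::finite)^('n::finite \<times> 'n::finite) \<Rightarrow> complex^'n^'n" where
  "ptrace_B r = (\<chi> i j. \<Sum>k\<in>UNIV. r $ (i, k) $ (j, k))"

definition ptrace_A :: "complex^('n::finite \<times> 'n::finite)^('n::finite \<times> 'n::finite) \<Rightarrow> complex^'n^'n" where
  "ptrace_A r = (\<chi> i j. \<Sum>k\<in>UNIV. r $ (k, i) $ (k, j))"

definition swap_op :: "complex^('n::finite \<times> 'n::finite)^('n::finite \<times> 'n::finite)" where
  "swap_op = (\<chi> x y. if fst x = snd y \<and> snd x = fst y then 1 else 0)"

definition CQ :: "complex^('n::finite \<times> 'n::finite)^('n::finite \<times> 'n::finite)" where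
  "CQ = (\<chi> x y. ((mat 1 :: complex^('n::finite \<times> 'n::finite)^('n::finite \<times> 'n::finite)) $ x $ y - swap_op $ x $ y) / 2)"

definition GammaQ :: "complex^'n^'n \<Rightarrow> complex^'n^'n \<Rightarrow> (complex^('n::finite \<times> 'n::finite)^('n::finite \<times> 'n::finite)) set" where
  "GammaQ rA rB = {r. density_mat r \<and> ptrace_B r = rA \<and> ptrace_A r = rB}"

text \<open>The minimum is rendered as the infimum (it is attained by compactness).
  Tr(C^Q r) is real for Hermitian r; we take its real part.\<close>
definition TQ :: "complex^'n^'n \<Rightarrow> complex^'n^'n \<Rightarrow> real" where
  "TQ rA rB = Inf ((\<lambda>r. Re (trace (CQ ** r))) ` GammaQ rA rB)"

definition mixed_unitary_channel :: "(complex^'n^'n \<Rightarrow> complex^'n^'n) \<Rightarrow> bool" where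
  "mixed_unitary_channel \<Psi> \<longleftrightarrow>
     (\<exists>(k::nat) (p::nat \<Rightarrow> real) (U::nat \<Rightarrow> complex^'n^'n).
        (\<forall>i<k. 0 \<le> p i \<and> unitary_mat (U i)) \<and> (\<Sum>i<k. p i) = 1 \<and>
        (\<forall>\<rho>. \<Psi> \<rho> = (\<Sum>i<k. p i *\<^sub>R (U i ** \<rho> ** cadj (U i)))))"

end

theory Submission
  imports Defs
begin

text \<open>
  Let \<open>\<rho>\<^sup>A\<^sup>B\<close> be a coupling of \<open>\<rho>\<^sup>A\<close> and \<open>\<rho>\<^sup>B\<close>. Transporting it by the product channel,
  \<open>\<Sum>\<^sub>i p\<^sub>i (U\<^sub>i \<otimes> U\<^sub>i) \<rho>\<^sup>A\<^sup>B (U\<^sub>i \<otimes> U\<^sub>i)\<^sup>\<dagger>\<close>, gives a coupling of \<open>\<Psi>(\<rho>\<^sup>A)\<close> and \<open>\<Psi>(\<rho>\<^sup>B)\<close>,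
  because conjugating by \<open>U \<otimes> V\<close> conjugates the two marginals by \<open>U\<close> and \<open>V\<close>.
  Its cost is unchanged, since \<open>C\<^sup>Q = (1 - S)/2\<close> commutes with \<open>U \<otimes> U\<close> (the swap
  \<open>S\<close> intertwines \<open>U \<otimes> V\<close> and \<open>V \<otimes> U\<close>). So the infimum on the left runs over a
  superset of the values on the right. For the infimum to behave, the coupling set
  must be nonempty, which is witnessed by \<open>\<rho>\<^sup>A \<otimes> \<rho>\<^sup>B\<close> (positivity of a Kronecker
  product follows from writing one factor as a sum of rank-one terms), and the costs
  must be bounded below, which holds as \<open>Tr (C\<^sup>Q \<rho>) = Tr (C\<^sup>Q \<rho> C\<^sup>Q) \<ge> 0\<close>.
\<close>

section \<open>Gram decomposition of positive semidefinite forms\<close>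

(* Forms indexed by an arbitrary finite set, so that the Gram decomposition can be
   proved by induction on the index set. *)
definition qform_on :: "'a set \<Rightarrow> ('a \<Rightarrow> 'a \<Rightarrow> complex) \<Rightarrow> ('a \<Rightarrow> complex) \<Rightarrow> complex" where
  "qform_on S B v = (\<Sum>k\<in>S. \<Sum>l\<in>S. cnj (v k) * B k l * v l)"

definition hermitian_on :: "'a set \<Rightarrow> ('a \<Rightarrow> 'a \<Rightarrow> complex) \<Rightarrow> bool" where
  "hermitian_on S B \<longleftrightarrow> (\<forall>k\<in>S. \<forall>l\<in>S. B l k = cnj (B k l))"

definition psd_on :: "'a set \<Rightarrow> ('a \<Rightarrow> 'a \<Rightarrow> complex) \<Rightarrow> bool" where
  "psd_on S B \<longleftrightarrow> (\<forall>v. 0 \<le> Re (qform_on S B v))"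

lemma sum_if_cond: "(\<Sum>x\<in>A. if P then f x else 0) = (if P then sum f A else 0)"
  by simp

lemma qform_on_add_unit:
  assumes "finite S" "k0 \<in> S"
  shows "qform_on S B (\<lambda>k. v k + (if k = k0 then t else 0)) = qform_on S B v
     + cnj t * (\<Sum>l\<in>S. B k0 l * v l) + t * (\<Sum>k\<in>S. cnj (v k) * B k k0) + cnj t * t * B k0 k0"
proof -
  have row: "(\<Sum>k\<in>S. \<Sum>l\<in>S. if k = k0 then cnj t * B k0 l * v l else 0) = cnj t * (\<Sum>l\<in>S. B k0 l * v l)"
    using assms by (simp add: sum_if_cond sum_distrib_left mult.assoc)
  have col: "(\<Sum>k\<in>S. \<Sum>l\<in>S. if l = k0 then cnj (v k) * B k k0 * t else 0) = t * (\<Sum>k\<in>S. cnj (v k) * B k k0)"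
    using assms by (simp add: sum_distrib_left mult.commute mult.left_commute)
  have corner: "(\<Sum>k\<in>S. \<Sum>l\<in>S. if k = k0 then if l = k0 then cnj t * B k0 k0 * t else 0 else 0) = cnj t * t * B k0 k0"
    using assms by (simp add: sum_if_cond mult_ac)
  have "qform_on S B (\<lambda>k. v k + (if k = k0 then t else 0)) =
    (\<Sum>k\<in>S. \<Sum>l\<in>S. cnj (v k) * B k l * v l + (if k = k0 then cnj t * B k0 l * v l else 0)
       + (if l = k0 then cnj (v k) * B k k0 * t else 0) + (if k = k0 then if l = k0 then cnj t * B k0 k0 * t else 0 else 0))"
    unfolding qform_on_def by (intro sum.cong refl) (auto simp: algebra_simps)
  also have "\<dots> = qform_on S B v + cnj t * (\<Sum>l\<in>S. B k0 l * v l) + t * (\<Sum>k\<in>S. cnj (v k) * B k k0) + cnj t * t * B k0 k0"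
    unfolding sum.distrib qform_on_def row col corner ..
  finally show ?thesis .
qed

lemma hermitian_on_diag_real:
  assumes "hermitian_on S B" "k \<in> S"
  shows "B k k = complex_of_real (Re (B k k))"
proof -
  have "B k k = cnj (B k k)" using assms unfolding hermitian_on_def by blast
  then have "Im (B k k) = Im (cnj (B k k))" by (rule arg_cong)
  then show ?thesis by (simp add: complex_eq_iff)
qed

lemma psd_on_diag_nonneg:
  assumes "finite S" "k0 \<in> S" "psd_on S B"
  shows "0 \<le> Re (B k0 k0)"
proof -
  have "qform_on S B (\<lambda>k. 0 + (if k = k0 then 1 else 0)) = B k0 k0"
    using qform_on_add_unit[OF assms(1,2), of B "\<lambda>_. 0" 1] by (simp add: qform_on_def)
  moreover have "0 \<le> Re (qform_on S B (\<lambda>k. 0 + (if k = k0 then 1 else 0)))"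
    using assms(3) unfolding psd_on_def by blast
  ultimately show ?thesis by simp
qed

lemma le_mult_of_quadratic_nonneg:
  fixes q b z :: real
  assumes "\<And>s. 0 \<le> q - 2 * s * z + s\<^sup>2 * z * b" "0 \<le> b" "0 \<le> z"
  shows "z \<le> q * b"
proof (cases "b > 0")
  case True
  have "0 \<le> q - 2 * (1/b) * z + (1/b)\<^sup>2 * z * b" by (rule assms(1))
  then show ?thesis using True by (simp add: field_simps power2_eq_square)
next
  case False
  then have b0: "b = 0" using assms(2) by simp
  show ?thesis
  proof (rule ccontr)
    assume "\<not> z \<le> q * b"
    then have "0 < z" using b0 by simp
    moreover have "0 \<le> q - 2 * ((q + 1) / (2 * z)) * z" using assms(1)[of "(q + 1) / (2 * z)"] b0 by simp
    ultimately show False by simp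
  qed
qed

lemma psd_on_cauchy_schwarz:
  assumes "finite S" "k0 \<in> S" "hermitian_on S B" "psd_on S B"
  shows "(cmod (\<Sum>k\<in>S. cnj (v k) * B k k0))\<^sup>2 \<le> Re (qform_on S B v) * Re (B k0 k0)"
proof -
  define c where "c = (\<Sum>k\<in>S. cnj (v k) * B k k0)"
  define b where "b = Re (B k0 k0)"
  have bb: "B k0 k0 = complex_of_real b"
    using hermitian_on_diag_real[OF assms(3,2)] b_def by simp
  have row: "(\<Sum>l\<in>S. B k0 l * v l) = cnj c"
    unfolding c_def cnj_sum
  proof (intro sum.cong refl)
    fix l assume "l \<in> S"
    then have "B k0 l = cnj (B l k0)" using assms(2,3) unfolding hermitian_on_def by blast
    then show "B k0 l * v l = cnj (cnj (v l) * B l k0)" by (simp add: mult.commute)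
  qed
  have "0 \<le> Re (qform_on S B v) - 2 * s * (cmod c)\<^sup>2 + s\<^sup>2 * (cmod c)\<^sup>2 * b" for s
  proof -
    \<comment> \<open>positivity at \<open>v + t e\<^sub>k\<^sub>0\<close> is a real quadratic inequality in \<open>s\<close>\<close>
    define t where "t = - complex_of_real s * cnj c"
    have "0 \<le> Re (qform_on S B (\<lambda>k. v k + (if k = k0 then t else 0)))"
      using assms(4) psd_on_def by blast
    also have "\<dots> = Re (qform_on S B v) - 2 * s * (cmod c)\<^sup>2 + s\<^sup>2 * (cmod c)\<^sup>2 * b"
      unfolding qform_on_add_unit[OF assms(1,2)] row c_def[symmetric] bb t_def cmod_power2
      by (simp add: power2_eq_square algebra_simps)
    finally show ?thesis .
  qed
  moreover have "0 \<le> b" using psd_on_diag_nonneg[OF assms(1,2,4)] b_def by simp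
  ultimately show ?thesis
    using le_mult_of_quadratic_nonneg[of "Re (qform_on S B v)" "(cmod c)\<^sup>2" b]
    unfolding c_def b_def by simp
qed

lemma psd_on_zero_pivot:
  assumes "finite S" "k0 \<in> S" "hermitian_on S B" "psd_on S B" "B k0 k0 = 0" "l \<in> S"
  shows "B l k0 = 0" "B k0 l = 0"
proof -
  have "cnj (if k = l then 1 else 0) * B k k0 = (if k = l then B l k0 else 0)" for k
    by simp
  then have "(\<Sum>k\<in>S. cnj (if k = l then 1 else 0) * B k k0) = B l k0"
    using assms(1,6) by (simp add: sum.delta')
  then have "(cmod (B l k0))\<^sup>2 \<le> 0"
    using psd_on_cauchy_schwarz[OF assms(1-4), of "\<lambda>k. if k = l then 1 else 0"]
    unfolding assms(5) by simp
  then show "B l k0 = 0" by simp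
  moreover have "B k0 l = cnj (B l k0)"
    using assms(2,3,6) unfolding hermitian_on_def by blast
  ultimately show "B k0 l = 0" by simp
qed

lemma psd_on_schur_complement:
  assumes "finite S" "k0 \<in> S" "hermitian_on S B" "psd_on S B" "B k0 k0 \<noteq> 0"
  shows "psd_on S (\<lambda>k l. B k l - B k k0 * cnj (B l k0) / B k0 k0)"
  unfolding psd_on_def
proof
  fix v
  define c where "c = (\<Sum>k\<in>S. cnj (v k) * B k k0)"
  define b where "b = Re (B k0 k0)"
  have bb: "B k0 k0 = complex_of_real b"
    unfolding b_def by (rule hermitian_on_diag_real[OF assms(3,2)])
  have "0 \<le> b" unfolding b_def by (rule psd_on_diag_nonneg[OF assms(1,2,4)])
  moreover have "b \<noteq> 0" using assms(5) bb by auto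
  ultimately have b0: "0 < b" by simp
  have "qform_on S (\<lambda>k l. B k l - B k k0 * cnj (B l k0) / B k0 k0) v
      = (\<Sum>k\<in>S. \<Sum>l\<in>S. cnj (v k) * B k l * v l - cnj (v k) * B k k0 * (v l * cnj (B l k0)) / B k0 k0)"
    unfolding qform_on_def by (simp add: right_diff_distrib left_diff_distrib mult_ac)
  also have "\<dots> = qform_on S B v - c * cnj c / B k0 k0"
    unfolding qform_on_def c_def sum_subtractf sum_product sum_divide_distrib cnj_sum complex_cnj_mult
      complex_cnj_cnj by (rule refl)
  also have "\<dots> = qform_on S B v - complex_of_real ((cmod c)\<^sup>2) / complex_of_real b"
    unfolding bb complex_norm_square ..
  finally have "Re (qform_on S (\<lambda>k l. B k l - B k k0 * cnj (B l k0) / B k0 k0) v)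
      = Re (qform_on S B v) - (cmod c)\<^sup>2 / b"
    by (simp del: of_real_power)
  moreover have "(cmod c)\<^sup>2 / b \<le> Re (qform_on S B v)"
    using psd_on_cauchy_schwarz[OF assms(1-4), of v] b0 unfolding c_def b_def
    by (simp add: divide_le_eq)
  ultimately show "0 \<le> Re (qform_on S (\<lambda>k l. B k l - B k k0 * cnj (B l k0) / B k0 k0) v)"
    by simp
qed

(* One step of a Cholesky factorisation: w is the pivot column divided by the square
   root of the pivot, or zero when the pivot vanishes. *)
lemma psd_on_split_rank_one:
  assumes "finite S" "k0 \<in> S" "hermitian_on S B" "psd_on S B"
  obtains w where "psd_on S (\<lambda>k l. B k l - w k * cnj (w l))"
    and "\<And>l. l \<in> S \<Longrightarrow> B l k0 = w l * cnj (w k0)"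
    and "\<And>l. l \<in> S \<Longrightarrow> B k0 l = w k0 * cnj (w l)"
proof (cases "B k0 k0 = 0")
  case True
  show ?thesis
    by (rule that[of "\<lambda>_. 0"]) (simp_all add: assms(4) psd_on_zero_pivot[OF assms True])
next
  case False
  define b where "b = Re (B k0 k0)"
  have bb: "B k0 k0 = complex_of_real b"
    unfolding b_def by (rule hermitian_on_diag_real[OF assms(3,2)])
  have "0 \<le> b" unfolding b_def by (rule psd_on_diag_nonneg[OF assms(1,2,4)])
  moreover have "b \<noteq> 0" using False bb by auto
  ultimately have b0: "0 < b" by simp
  define w where "w k = B k k0 / complex_of_real (sqrt b)" for k
  have ww: "w k * cnj (w l) = B k k0 * cnj (B l k0) / B k0 k0" for k l
  proof -
    have "complex_of_real (sqrt b) * complex_of_real (sqrt b) = B k0 k0"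
      using b0 bb by (simp flip: of_real_mult)
    then show ?thesis unfolding w_def by (simp flip: times_divide_times_eq)
  qed
  show ?thesis
  proof (rule that)
    show "psd_on S (\<lambda>k l. B k l - w k * cnj (w l))"
      unfolding ww by (rule psd_on_schur_complement[OF assms False])
  next
    fix l assume "l \<in> S"
    have "cnj (B k0 k0) = B k0 k0" using bb by simp
    then show "B l k0 = w l * cnj (w k0)"
      unfolding ww using False by simp
    have "B k0 l = cnj (B l k0)"
      using assms(2,3) \<open>l \<in> S\<close> unfolding hermitian_on_def by blast
    then show "B k0 l = w k0 * cnj (w l)"
      unfolding ww using False by simp
  qed
qed

lemma hermitian_on_subtract_rank_one:
  assumes "hermitian_on S B"
  shows "hermitian_on S (\<lambda>k l. B k l - w k * cnj (w l))"
  unfolding hermitian_on_def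
proof (intro ballI)
  fix k l assume "k \<in> S" "l \<in> S"
  then have "B l k = cnj (B k l)" using assms unfolding hermitian_on_def by blast
  then show "B l k - w l * cnj (w k) = cnj (B k l - w k * cnj (w l))" by (simp add: mult.commute)
qed

lemma psd_on_subset:
  assumes "finite T" "S \<subseteq> T" "psd_on T B"
  shows "psd_on S B"
  unfolding psd_on_def
proof
  fix v :: "'a \<Rightarrow> complex"
  define v' where "v' k = (if k \<in> S then v k else 0)" for k
  have inner: "(\<Sum>l\<in>T. cnj (v' k) * B k l * v' l) = (\<Sum>l\<in>S. cnj (v' k) * B k l * v' l)" for k
    by (rule sum.mono_neutral_right) (use assms in \<open>auto simp: v'_def\<close>)
  have "qform_on T B v' = (\<Sum>k\<in>S. \<Sum>l\<in>S. cnj (v' k) * B k l * v' l)"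
    unfolding qform_on_def inner
    by (rule sum.mono_neutral_right) (use assms in \<open>auto simp: v'_def\<close>)
  also have "\<dots> = qform_on S B v"
    unfolding qform_on_def v'_def by (auto intro!: sum.cong)
  finally show "0 \<le> Re (qform_on S B v)"
    using assms(3) unfolding psd_on_def by metis
qed

lemma psd_on_gram:
  assumes "finite S" "hermitian_on S B" "psd_on S B"
  shows "\<exists>(m::nat) w. \<forall>k\<in>S. \<forall>l\<in>S. B k l = (\<Sum>j<m. w j k * cnj (w j l))"
  using assms
proof (induction S arbitrary: B rule: finite_induct)
  case empty
  then show ?case by simp
next
  case (insert k0 S)
  obtain w where psd: "psd_on (insert k0 S) (\<lambda>k l. B k l - w k * cnj (w l))"
    and col: "\<And>l. l \<in> insert k0 S \<Longrightarrow> B l k0 = w l * cnj (w k0)"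
    and row: "\<And>l. l \<in> insert k0 S \<Longrightarrow> B k0 l = w k0 * cnj (w l)"
    using psd_on_split_rank_one[of "insert k0 S" k0 B] insert.hyps insert.prems by blast
  have "hermitian_on S (\<lambda>k l. B k l - w k * cnj (w l))"
    using hermitian_on_subtract_rank_one[OF insert.prems(1)] unfolding hermitian_on_def by blast
  moreover have "psd_on S (\<lambda>k l. B k l - w k * cnj (w l))"
    using psd_on_subset[OF _ _ psd] insert.hyps(1) by blast
  ultimately obtain m :: nat and u
    where u: "\<forall>k\<in>S. \<forall>l\<in>S. B k l - w k * cnj (w l) = (\<Sum>j<m. u j k * cnj (u j l))"
    using insert.IH by blast
  define u' where "u' j = (if j < m then (\<lambda>k. if k = k0 then 0 else u j k) else w)" for j
  have "B k l = (\<Sum>j<Suc m. u' j k * cnj (u' j l))"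
    if "k \<in> insert k0 S" "l \<in> insert k0 S" for k l
  proof (cases "k = k0 \<or> l = k0")
    case True
    then show ?thesis using col row that by (auto simp: u'_def)
  next
    case False
    then show ?thesis using u that by (auto simp: u'_def diff_eq_eq)
  qed
  then show ?case by blast
qed

lemma cadj_nth [simp]: "cadj A $ i $ j = cnj (A $ j $ i)"
  by (simp add: cadj_def)

lemma cadj_cadj [simp]: "cadj (cadj A) = A"
  by (simp add: vec_eq_iff)

lemma matrix_matrix_mult_nth: "(A ** B) $ i $ j = (\<Sum>k\<in>UNIV. A $ i $ k * B $ k $ j)"
  by (simp add: matrix_matrix_mult_def)

lemma matrix_vector_mult_nth: "(M *v v) $ i = (\<Sum>j\<in>UNIV. M $ i $ j * v $ j)"
  by (simp add: matrix_vector_mult_def)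

lemma cadj_matrix_mult: "cadj (A ** B) = cadj B ** (cadj A :: complex^_^_)"
  by (simp add: vec_eq_iff matrix_matrix_mult_nth cnj_sum mult.commute)

lemma sum_UNIV_prod:
  "(\<Sum>x\<in>(UNIV :: ('a::finite \<times> 'b::finite) set). f x) = (\<Sum>a\<in>UNIV. \<Sum>b\<in>UNIV. f (a, b))"
  by (simp add: UNIV_Times_UNIV[symmetric] sum.cartesian_product del: UNIV_Times_UNIV)

definition qform :: "complex^'n^'n \<Rightarrow> complex^'n \<Rightarrow> complex" where
  "qform M v = (\<Sum>i\<in>UNIV. cnj (v $ i) * (M *v v) $ i)"

lemma psd_mat_iff_qform: "psd_mat M \<longleftrightarrow> hermitian_mat M \<and> (\<forall>v. 0 \<le> Re (qform M v))"
  by (simp add: psd_mat_def qform_def)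

lemma qform_eq_qform_on: "qform M v = qform_on UNIV (\<lambda>i j. M $ i $ j) (\<lambda>i. v $ i)"
  by (simp add: qform_def qform_on_def matrix_vector_mult_nth sum_distrib_left mult_ac)

lemma psd_mat_imp_psd_on:
  assumes "psd_mat M"
  shows "psd_on UNIV (\<lambda>i j. M $ i $ j)"
  unfolding psd_on_def
proof
  fix v
  have "qform_on UNIV (\<lambda>i j. M $ i $ j) v = qform M (\<chi> i. v i)"
    by (simp add: qform_eq_qform_on)
  then show "0 \<le> Re (qform_on UNIV (\<lambda>i j. M $ i $ j) v)"
    using assms by (simp add: psd_mat_iff_qform)
qed

lemma hermitian_mat_imp_hermitian_on:
  assumes "hermitian_mat M"
  shows "hermitian_on UNIV (\<lambda>i j. M $ i $ j)"
  unfolding hermitian_on_def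
proof (intro ballI)
  fix k l
  have "cadj M $ l $ k = M $ l $ k" using assms by (simp add: hermitian_mat_def)
  then show "M $ l $ k = cnj (M $ k $ l)" by simp
qed

lemma sum_cnj_matrix_vector_mult:
  fixes A :: "complex^'m^'n"
  shows "(\<Sum>i\<in>UNIV. cnj (v $ i) * (A *v w) $ i) = (\<Sum>j\<in>UNIV. cnj ((cadj A *v v) $ j) * w $ j)"
proof -
  have "(\<Sum>i\<in>UNIV. cnj (v $ i) * (A *v w) $ i) = (\<Sum>i\<in>UNIV. \<Sum>j\<in>UNIV. cnj (v $ i) * A $ i $ j * w $ j)"
    by (simp add: matrix_vector_mult_nth sum_distrib_left mult.assoc)
  also have "\<dots> = (\<Sum>j\<in>UNIV. \<Sum>i\<in>UNIV. cnj (v $ i) * A $ i $ j * w $ j)"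
    by (rule sum.swap)
  also have "\<dots> = (\<Sum>j\<in>UNIV. cnj ((cadj A *v v) $ j) * w $ j)"
    by (simp add: matrix_vector_mult_nth sum_distrib_left sum_distrib_right mult_ac)
  finally show ?thesis .
qed

lemma qform_matrix_conj: "qform (A ** B ** cadj A) v = qform B (cadj A *v v)"
  unfolding qform_def matrix_vector_mul_assoc[symmetric] sum_cnj_matrix_vector_mult[of v A] ..

lemma linear_sum_scaleR: "linear f \<Longrightarrow> f (\<Sum>i\<in>I. c i *\<^sub>R x i) = (\<Sum>i\<in>I. c i *\<^sub>R f (x i))"
  by (simp add: linear_sum linear_scale)

lemma linear_qform: "linear (\<lambda>M. qform M v)"
  by (rule linearI)
    (simp_all add: qform_def matrix_vector_mult_nth sum.distrib scaleR_sum_right distrib_left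
      distrib_right sum_distrib_left)

lemma linear_cadj: "linear cadj"
  by (rule linearI) (simp_all add: vec_eq_iff)

lemma linear_trace: "linear (trace :: complex^'n^'n \<Rightarrow> complex)"
  by (rule linearI) (simp_all add: trace_def sum.distrib scaleR_sum_right)

lemma linear_matrix_mult_left: "linear (\<lambda>B. A ** (B :: complex^'m^'k))"
  by (rule linearI) (simp_all add: matrix_add_ldistrib vec_eq_iff matrix_matrix_mult_nth scaleR_sum_right)

lemma linear_matrix_mult_right: "linear (\<lambda>A. (A :: complex^'k^'n) ** B)"
  by (rule linearI)
    (simp_all add: vec_eq_iff matrix_matrix_mult_nth scaleR_sum_right distrib_right sum.distrib)

lemma linear_ptrace_B: "linear ptrace_B"
  by (rule linearI) (simp_all add: vec_eq_iff ptrace_B_def sum.distrib scaleR_sum_right)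

lemma linear_ptrace_A: "linear ptrace_A"
  by (rule linearI) (simp_all add: vec_eq_iff ptrace_A_def sum.distrib scaleR_sum_right)

definition kron :: "complex^'m^'k \<Rightarrow> complex^'n^'l \<Rightarrow> complex^('m \<times> 'n)^('k \<times> 'l)" where
  "kron A B = (\<chi> x y. A $ fst x $ fst y * B $ snd x $ snd y)"

lemma kron_nth [simp]: "kron A B $ x $ y = A $ fst x $ fst y * B $ snd x $ snd y"
  by (simp add: kron_def)

lemma kron_matrix_mult: "kron A B ** kron C D = kron (A ** C) (B ** D)"
  by (simp add: vec_eq_iff matrix_matrix_mult_nth sum_UNIV_prod sum_product mult_ac)

lemma cadj_kron: "cadj (kron A B) = kron (cadj A) (cadj B)"
  by (simp add: vec_eq_iff)

lemma kron_mat_1: "kron (mat 1) (mat 1) = mat 1"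
  by (simp add: vec_eq_iff mat_def prod_eq_iff)

lemma kron_sum_right: "kron A (\<Sum>j\<in>J. B j) = (\<Sum>j\<in>J. kron A (B j))"
  by (induction J rule: infinite_finite_induct) (simp_all add: vec_eq_iff algebra_simps)

lemma unitary_kron: "unitary_mat U \<Longrightarrow> unitary_mat V \<Longrightarrow> unitary_mat (kron U V)"
  by (simp add: unitary_mat_def cadj_kron kron_matrix_mult kron_mat_1)

lemma qform_kron_rank_one:
  "qform (kron A (\<chi> k l. u k * cnj (u l))) v = qform A (\<chi> i. \<Sum>l\<in>UNIV. v $ (i, l) * cnj (u l))"
proof -
  let ?F = "\<lambda>a b n l. cnj (v $ (a, b)) * u b * A $ a $ n * cnj (u l) * v $ (n, l)"
  have "qform (kron A (\<chi> k l. u k * cnj (u l))) v = (\<Sum>a\<in>UNIV. \<Sum>b\<in>UNIV. \<Sum>n\<in>UNIV. \<Sum>l\<in>UNIV. ?F a b n l)"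
    by (simp add: qform_def matrix_vector_mult_nth sum_UNIV_prod sum_distrib_left mult_ac)
  also have "\<dots> = (\<Sum>a\<in>UNIV. \<Sum>n\<in>UNIV. \<Sum>l\<in>UNIV. \<Sum>b\<in>UNIV. ?F a b n l)"
    by (rule sum.cong[OF refl], subst sum.swap, rule sum.cong[OF refl], rule sum.swap)
  also have "\<dots> = qform A (\<chi> i. \<Sum>l\<in>UNIV. v $ (i, l) * cnj (u l))"
    by (simp add: qform_def matrix_vector_mult_nth sum_distrib_left sum_distrib_right mult_ac)
  finally show ?thesis .
qed

lemma psd_mat_kron:
  assumes "psd_mat A" "psd_mat B"
  shows "psd_mat (kron A B)"
  unfolding psd_mat_iff_qform
proof (intro conjI allI)
  show "hermitian_mat (kron A B)"
    using assms unfolding psd_mat_def hermitian_mat_def cadj_kron by simp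
  fix v
  have "hermitian_mat B" using assms(2) unfolding psd_mat_def by blast
  then obtain m :: nat and w where "\<forall>k l. B $ k $ l = (\<Sum>j<m. w j k * cnj (w j l))"
    using psd_on_gram[OF finite hermitian_mat_imp_hermitian_on psd_mat_imp_psd_on[OF assms(2)]]
    by blast
  then have "B = (\<Sum>j<m. \<chi> k l. w j k * cnj (w j l))"
    by (simp add: vec_eq_iff)
  then have "qform (kron A B) v = (\<Sum>j<m. qform A (\<chi> i. \<Sum>l\<in>UNIV. v $ (i, l) * cnj (w j l)))"
    by (simp add: kron_sum_right linear_sum[OF linear_qform] qform_kron_rank_one)
  then show "0 \<le> Re (qform (kron A B) v)"
    using assms(1) unfolding psd_mat_iff_qform by (simp add: sum_nonneg)
qed

section \<open>The swap operator and the cost\<close>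

lemma swap_op_nth: "swap_op $ x $ y = (if y = prod.swap x then 1 else 0)"
  by (cases x; cases y) (auto simp: swap_op_def)

lemma swap_op_mult_nth: "(swap_op ** M) $ x $ y = M $ prod.swap x $ y"
proof -
  have "swap_op $ x $ k * M $ k $ y = (if k = prod.swap x then M $ k $ y else 0)" for k
    by (simp add: swap_op_nth)
  then show ?thesis by (simp add: matrix_matrix_mult_nth)
qed

lemma mult_swap_op_nth: "(M ** swap_op) $ x $ y = M $ x $ prod.swap y"
proof -
  have "M $ x $ k * swap_op $ k $ y = (if k = prod.swap y then M $ x $ k else 0)" for k
    by (cases k; cases y) (auto simp: swap_op_def)
  then show ?thesis by (simp add: matrix_matrix_mult_nth)
qed

lemma swap_op_kron: "swap_op ** kron A B = kron B A ** swap_op"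
  by (simp add: vec_eq_iff swap_op_mult_nth mult_swap_op_nth mult.commute)

lemma swap_op_squared: "swap_op ** swap_op = mat 1"
  by (auto simp: vec_eq_iff swap_op_mult_nth swap_op_nth mat_def)

lemma cadj_swap_op: "cadj swap_op = swap_op"
  by (simp add: vec_eq_iff swap_op_def)

lemma CQ_eq: "CQ = (1/2::real) *\<^sub>R (mat 1 - swap_op)"
  by (simp add: vec_eq_iff CQ_def) (simp add: scaleR_conv_of_real)

lemma cadj_CQ: "cadj CQ = CQ"
proof -
  have "cadj (mat 1 :: complex^_^_) = mat 1" by (simp add: vec_eq_iff mat_def)
  then show ?thesis
    unfolding CQ_eq by (simp add: linear_scale[OF linear_cadj] linear_diff[OF linear_cadj] cadj_swap_op)
qed

lemma CQ_idempotent: "CQ ** CQ = CQ"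
proof -
  have sq: "(mat 1 - swap_op) ** (mat 1 - swap_op) = (2::real) *\<^sub>R (mat 1 - swap_op :: complex^_^_)"
    by (simp add: linear_diff[OF linear_matrix_mult_left] linear_diff[OF linear_matrix_mult_right]
        swap_op_squared scaleR_2)
  show ?thesis
    unfolding CQ_eq linear_scale[OF linear_matrix_mult_left] linear_scale[OF linear_matrix_mult_right]
      sq scaleR_scaleR by simp
qed

lemma kron_commute_CQ: "kron U U ** CQ = CQ ** kron U U"
  unfolding CQ_eq
  by (simp add: linear_scale[OF linear_matrix_mult_left] linear_scale[OF linear_matrix_mult_right]
      linear_diff[OF linear_matrix_mult_left] linear_diff[OF linear_matrix_mult_right] swap_op_kron)

lemma trace_adjoint_conj_nonneg:
  assumes "psd_mat r"
  shows "0 \<le> Re (trace (cadj V ** r ** V))"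
proof -
  have "(cadj V ** r ** V) $ i $ i = qform r (column i V)" for i
    by (simp add: matrix_mul_assoc[symmetric] qform_def matrix_matrix_mult_nth matrix_vector_mult_nth
        column_def)
  then show ?thesis
    using assms unfolding trace_def psd_mat_iff_qform by (simp add: sum_nonneg)
qed

lemma CQ_cost_nonneg:
  assumes "psd_mat r"
  shows "0 \<le> Re (trace (CQ ** r))"
proof -
  have "trace (CQ ** r) = trace (CQ ** (CQ ** r))"
    by (simp add: matrix_mul_assoc CQ_idempotent)
  also have "\<dots> = trace (cadj CQ ** r ** CQ)"
    by (simp add: trace_mul_sym[of CQ] cadj_CQ)
  finally show ?thesis using trace_adjoint_conj_nonneg[OF assms] by simp
qed

lemma trace_CQ_kron_conj:
  assumes "unitary_mat V"
  shows "trace (CQ ** (kron V V ** r ** cadj (kron V V))) = trace (CQ ** r)"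
proof -
  have "trace (CQ ** (kron V V ** r ** cadj (kron V V)))
      = trace (cadj (kron V V) ** (CQ ** kron V V) ** r)"
    by (simp add: matrix_mul_assoc trace_mul_sym[of "CQ ** kron V V ** r"])
  also have "\<dots> = trace (CQ ** r)"
    using unitary_kron[OF assms assms] unfolding unitary_mat_def
    by (simp flip: kron_commute_CQ add: matrix_mul_assoc)
  finally show ?thesis .
qed

section \<open>Partial traces\<close>

lemma ptrace_B_kron_left: "ptrace_B (kron A (mat 1) ** r) = A ** ptrace_B r"
  by (simp add: vec_eq_iff ptrace_B_def matrix_matrix_mult_nth sum_UNIV_prod mat_def sum_distrib_left
      if_distrib[of "\<lambda>z. z * _"] if_distrib[of "\<lambda>z. _ * z"] cong: if_cong)
    (intro allI sum.swap)

lemma ptrace_B_kron_right: "ptrace_B (r ** kron A (mat 1)) = ptrace_B r ** A"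
  by (simp add: vec_eq_iff ptrace_B_def matrix_matrix_mult_nth sum_UNIV_prod mat_def sum_distrib_right
      if_distrib[of "\<lambda>z. z * _"] if_distrib[of "\<lambda>z. _ * z"] cong: if_cong)
    (intro allI sum.swap)

lemma ptrace_B_kron_cyclic: "ptrace_B (kron (mat 1) X ** r) = ptrace_B (r ** kron (mat 1) X)"
  by (simp add: vec_eq_iff ptrace_B_def matrix_matrix_mult_nth sum_UNIV_prod mat_def sum_if_cond
      if_distrib[of "\<lambda>z. z * _"] if_distrib[of "\<lambda>z. _ * z"] mult.commute cong: if_cong)
    (intro allI sum.swap)

lemma ptrace_A_eq_ptrace_B_swap: "ptrace_A r = ptrace_B (swap_op ** r ** swap_op)"
  by (simp add: vec_eq_iff ptrace_A_def ptrace_B_def swap_op_mult_nth mult_swap_op_nth)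

lemma ptrace_B_kron_conj:
  fixes U V :: "complex^'n^'n"
  assumes "unitary_mat V"
  shows "ptrace_B (kron U V ** r ** cadj (kron U V)) = U ** ptrace_B r ** cadj U"
proof -
  have split: "kron U V = kron U (mat 1) ** kron (mat 1) V"
    and split_cadj: "cadj (kron U V) = kron (mat 1) (cadj V) ** kron (cadj U) (mat 1)"
    by (simp_all add: kron_matrix_mult cadj_kron)
  have "kron U V ** r ** cadj (kron U V)
      = kron U (mat 1) ** (kron (mat 1) V ** (r ** kron (mat 1) (cadj V))) ** kron (cadj U) (mat 1)"
    unfolding split_cadj by (subst split) (simp only: matrix_mul_assoc)
  then have "ptrace_B (kron U V ** r ** cadj (kron U V))
      = U ** ptrace_B (kron (mat 1) V ** (r ** kron (mat 1) (cadj V))) ** cadj U"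
    by (simp only: ptrace_B_kron_left ptrace_B_kron_right)
  also have "ptrace_B (kron (mat 1) V ** (r ** kron (mat 1) (cadj V))) = ptrace_B r"
    unfolding ptrace_B_kron_cyclic
    by (simp add: matrix_mul_assoc[symmetric] kron_matrix_mult kron_mat_1 assms[unfolded unitary_mat_def])
  finally show ?thesis .
qed

lemma ptrace_A_kron_conj:
  fixes U V :: "complex^'n^'n"
  assumes "unitary_mat U"
  shows "ptrace_A (kron U V ** r ** cadj (kron U V)) = V ** ptrace_A r ** cadj V"
proof -
  have left: "swap_op ** kron U V = kron V U ** swap_op"
    by (rule swap_op_kron)
  have right: "cadj (kron U V) ** swap_op = swap_op ** cadj (kron V U)"
    using arg_cong[OF left, of cadj] by (simp add: cadj_matrix_mult cadj_swap_op)
  have "swap_op ** (kron U V ** r ** cadj (kron U V)) ** swap_op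
      = (swap_op ** kron U V) ** r ** (cadj (kron U V) ** swap_op)"
    by (simp add: matrix_mul_assoc)
  also have "\<dots> = kron V U ** (swap_op ** r ** swap_op) ** cadj (kron V U)"
    unfolding left right by (simp add: matrix_mul_assoc)
  finally show ?thesis
    by (simp add: ptrace_A_eq_ptrace_B_swap ptrace_B_kron_conj[OF assms])
qed

lemma trace_unitary_conj: "unitary_mat W \<Longrightarrow> trace (W ** r ** cadj W) = trace r"
  by (simp add: unitary_mat_def trace_mul_sym[of "W ** r"] matrix_mul_assoc)

lemma density_mat_unitary_conj:
  assumes "unitary_mat W" "density_mat r"
  shows "density_mat (W ** r ** cadj W)"
  using assms unfolding density_mat_def psd_mat_iff_qform hermitian_mat_def
  by (simp add: cadj_matrix_mult matrix_mul_assoc qform_matrix_conj trace_unitary_conj)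

lemma density_mat_convex_sum:
  assumes "\<forall>i\<in>I. 0 \<le> p i \<and> density_mat (r i)" "sum p I = 1"
  shows "density_mat (\<Sum>i\<in>I. p i *\<^sub>R r i)"
  unfolding density_mat_def psd_mat_iff_qform hermitian_mat_def
proof (intro conjI allI)
  show "cadj (\<Sum>i\<in>I. p i *\<^sub>R r i) = (\<Sum>i\<in>I. p i *\<^sub>R r i)"
    using assms(1) unfolding linear_sum_scaleR[OF linear_cadj] density_mat_def psd_mat_def
      hermitian_mat_def by simp
  show "0 \<le> Re (qform (\<Sum>i\<in>I. p i *\<^sub>R r i) v)" for v
    using assms(1) unfolding linear_sum_scaleR[OF linear_qform] density_mat_def psd_mat_iff_qform
    by (simp add: sum_nonneg)
  have "trace (\<Sum>i\<in>I. p i *\<^sub>R r i) = (\<Sum>i\<in>I. p i *\<^sub>R 1)"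
    using assms(1) unfolding linear_sum_scaleR[OF linear_trace] density_mat_def by simp
  then show "trace (\<Sum>i\<in>I. p i *\<^sub>R r i) = 1"
    using assms(2) by (simp flip: scaleR_sum_left)
qed

lemma kron_mem_GammaQ:
  assumes "density_mat rA" "density_mat rB"
  shows "kron rA rB \<in> GammaQ rA rB"
proof -
  have "trace rA = 1" "trace rB = 1" using assms density_mat_def by auto
  moreover have "trace (kron rA rB) = trace rA * trace rB"
    by (simp add: trace_def sum_UNIV_prod sum_product)
  moreover have "ptrace_B (kron rA rB) = rA" "ptrace_A (kron rA rB) = rB"
    using calculation(1,2)
    by (simp_all add: vec_eq_iff ptrace_B_def ptrace_A_def trace_def
        sum_distrib_left[symmetric] sum_distrib_right[symmetric])
  ultimately show ?thesis
    using psd_mat_kron[of rA rB] assms unfolding GammaQ_def density_mat_def by simp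
qed

lemma mixed_unitary_coupling:
  fixes U :: "'i \<Rightarrow> complex^'n^'n"
  assumes "\<forall>i\<in>I. 0 \<le> p i \<and> unitary_mat (U i)" "sum p I = 1" "r \<in> GammaQ rA rB"
  defines "r' \<equiv> (\<Sum>i\<in>I. p i *\<^sub>R (kron (U i) (U i) ** r ** cadj (kron (U i) (U i))))"
  shows "r' \<in> GammaQ (\<Sum>i\<in>I. p i *\<^sub>R (U i ** rA ** cadj (U i))) (\<Sum>i\<in>I. p i *\<^sub>R (U i ** rB ** cadj (U i)))"
    and "trace (CQ ** r') = trace (CQ ** r)"
proof -
  have U: "unitary_mat (U i)" if "i \<in> I" for i
    using assms(1) that by blast
  have r: "density_mat r" "ptrace_B r = rA" "ptrace_A r = rB"
    using assms(3) unfolding GammaQ_def by auto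
  have "density_mat r'"
    unfolding r'_def using assms(1,2) U
    by (intro density_mat_convex_sum) (simp add: density_mat_unitary_conj unitary_kron r(1))
  moreover have "ptrace_B r' = (\<Sum>i\<in>I. p i *\<^sub>R (U i ** rA ** cadj (U i)))"
    unfolding r'_def linear_sum_scaleR[OF linear_ptrace_B] using U
    by (intro sum.cong refl) (simp add: ptrace_B_kron_conj r(2))
  moreover have "ptrace_A r' = (\<Sum>i\<in>I. p i *\<^sub>R (U i ** rB ** cadj (U i)))"
    unfolding r'_def linear_sum_scaleR[OF linear_ptrace_A] using U
    by (intro sum.cong refl) (simp add: ptrace_A_kron_conj r(3))
  ultimately show "r' \<in> GammaQ (\<Sum>i\<in>I. p i *\<^sub>R (U i ** rA ** cadj (U i))) (\<Sum>i\<in>I. p i *\<^sub>R (U i ** rB ** cadj (U i)))"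
    unfolding GammaQ_def by simp
  have "trace (CQ ** r') = (\<Sum>i\<in>I. p i *\<^sub>R trace (CQ ** r))"
    unfolding r'_def linear_sum_scaleR[OF linear_matrix_mult_left]
      linear_sum_scaleR[OF linear_trace] using U
    by (intro sum.cong refl) (simp add: trace_CQ_kron_conj)
  then show "trace (CQ ** r') = trace (CQ ** r)"
    using assms(2) by (simp flip: scaleR_sum_left)
qed

(* Nonemptiness is needed because the infimum of the empty set of reals is unspecified. *)
lemma TQ_le_of_cost_preserving_map:
  assumes "GammaQ rA rB \<noteq> {}"
    and "\<And>r. r \<in> GammaQ rA rB \<Longrightarrow> f r \<in> GammaQ rA' rB'"
    and "\<And>r. r \<in> GammaQ rA rB \<Longrightarrow> trace (CQ ** f r) = trace (CQ ** r)"
  shows "TQ rA' rB' \<le> TQ rA rB"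
  unfolding TQ_def
proof (rule cInf_superset_mono)
  show "(\<lambda>r. Re (trace (CQ ** r))) ` GammaQ rA rB \<noteq> {}"
    using assms(1) by simp
  show "bdd_below ((\<lambda>r. Re (trace (CQ ** r))) ` GammaQ rA' rB')"
    by (rule bdd_belowI[of _ 0]) (auto simp: GammaQ_def density_mat_def intro: CQ_cost_nonneg)
  show "(\<lambda>r. Re (trace (CQ ** r))) ` GammaQ rA rB \<subseteq> (\<lambda>r. Re (trace (CQ ** r))) ` GammaQ rA' rB'"
  proof
    fix x assume "x \<in> (\<lambda>r. Re (trace (CQ ** r))) ` GammaQ rA rB"
    then obtain r where "r \<in> GammaQ rA rB" "x = Re (trace (CQ ** r))" by blast
    then show "x \<in> (\<lambda>r. Re (trace (CQ ** r))) ` GammaQ rA' rB'"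
      using assms(2,3) by (intro image_eqI[of _ _ "f r"]) simp_all
  qed
qed

theorem proposition4p1:
  fixes \<Psi> :: "complex^'n^'n \<Rightarrow> complex^'n^'n" and rA rB :: "complex^'n^'n"
  assumes "mixed_unitary_channel \<Psi>"
    and "density_mat rA" and "density_mat rB"
  shows "TQ (\<Psi> rA) (\<Psi> rB) \<le> TQ rA rB"
proof -
  obtain k :: nat and p U where pU: "\<forall>i<k. 0 \<le> p i \<and> unitary_mat (U i)" and p: "(\<Sum>i<k. p i) = 1"
    and \<Psi>: "\<forall>\<rho>. \<Psi> \<rho> = (\<Sum>i<k. p i *\<^sub>R (U i ** \<rho> ** cadj (U i)))"
    using assms(1) unfolding mixed_unitary_channel_def by blast
  show ?thesis
  proof (rule TQ_le_of_cost_preserving_map)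
    show "GammaQ rA rB \<noteq> {}"
      using kron_mem_GammaQ[OF assms(2,3)] by blast
    fix r assume "r \<in> GammaQ rA rB"
    from mixed_unitary_coupling[of "{..<k}", OF _ p this] pU \<Psi>
    show "(\<Sum>i<k. p i *\<^sub>R (kron (U i) (U i) ** r ** cadj (kron (U i) (U i)))) \<in> GammaQ (\<Psi> rA) (\<Psi> rB)"
      and "trace (CQ ** (\<Sum>i<k. p i *\<^sub>R (kron (U i) (U i) ** r ** cadj (kron (U i) (U i))))) = trace (CQ ** r)"
      by simp_all
  qed
qed

end
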